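(* Let $h>0$, $0<\alpha\le 2$, and $N=2^n$ for a positive integer $n$. Define the kernel $c_m$ ($m\in\mathbb Z$) and the frequency grid $\bar\xi_k$ as in the context, and let \[ \widetilde A^{(N)}_{\alpha,h}=QFT_N^{-1}\,\operatorname{diag}\big(|\bar\xi_0|^\alpha,\ldots,|\bar\xi_{N-1}|^\alpha\big)\,QFT_N . \] Then for all $0\le i,j\le N-1$, \[ (\widetilde A^{(N)}_{\alpha,h})_{ij}=\sum_{\ell\in\mathbb Z} c_{i-j+\ell N}. \] Consequently, with $A^{(N)}_{\alpha,h}$ the $N\times N$ Toeplitz matrix with entries $(A^{(N)}_{\alpha,h})_{ij}=c_{i-j}$, the difference satisfies $(\widetilde A^{(N)}_{\alpha,h}-A^{(N)}_{\alpha,h})_{ij}=\sum_{\ell\neq 0} c_{i-j+\ell N}$.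
   Context: Kernel: for $m\in\mathbb Z$, $c_m=\frac{h}{2\pi}\int_{-\pi/h}^{\pi/h}|\xi|^\alpha e^{i\xi h m}\,d\xi=\frac{h}{\pi}\int_0^{\pi/h}\xi^\alpha\cos(mh\xi)\,d\xi$; these are the convolution coefficients of the semi-discrete fractional Laplacian on the lattice $h\mathbb Z$ (the Fourier multiplier with symbol $|\xi|^\alpha$, $\xi\in[-\pi/h,\pi/h]$). Indices of $N\times N$ matrices run over $\{0,\ldots,N-1\}$. FFT-ordered frequency grid: $\bar\xi_k=2\pi k/(Nh)$ for $0\le k<N/2$ and $\bar\xi_k=2\pi k/(Nh)-2\pi/h$ for $N/2\le k<N$. $QFT_N$ is the unitary $N\times N$ discrete Fourier transform matrix with entries $(QFT_N)_{kj}=N^{-1/2}e^{2\pi i jk/N}$. *)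

theory Defs
  imports "HOL-Analysis.Analysis" "Jordan_Normal_Form.Matrix"
begin

definition kernel_c :: "real \<Rightarrow> real \<Rightarrow> int \<Rightarrow> real" where
  "kernel_c h \<alpha> m = (h / pi) * integral {0..pi / h} (\<lambda>\<xi>. \<xi> powr \<alpha> * cos (real_of_int m * h * \<xi>))"

text \<open>FFT-ordered frequency grid.\<close>
definition xi_bar :: "real \<Rightarrow> nat \<Rightarrow> nat \<Rightarrow> real" where
  "xi_bar h N k = (if real k < real N / 2 then 2 * pi * real k / (real N * h)
                   else 2 * pi * real k / (real N * h) - 2 * pi / h)"

definition QFT :: "nat \<Rightarrow> complex mat" where
  "QFT N = mat N N (\<lambda>(k, j). exp (2 * pi * \<i> * of_nat (j * k) / of_nat N) / of_real (sqrt (real N)))"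

definition mat_inv :: "nat \<Rightarrow> complex mat \<Rightarrow> complex mat" where
  "mat_inv N A = (THE B. B \<in> carrier_mat N N \<and> A * B = 1\<^sub>m N \<and> B * A = 1\<^sub>m N)"

definition A_tilde :: "real \<Rightarrow> real \<Rightarrow> nat \<Rightarrow> complex mat" where
  "A_tilde \<alpha> h N = mat_inv N (QFT N) * mat_diag N (\<lambda>k. of_real (\<bar>xi_bar h N k\<bar> powr \<alpha>)) * QFT N"

definition A_toep :: "real \<Rightarrow> real \<Rightarrow> nat \<Rightarrow> complex mat" where
  "A_toep \<alpha> h N = mat N N (\<lambda>(i, j). of_real (kernel_c h \<alpha> (int i - int j)))"

end

theory Submission
  imports Defs
begin

text \<open>Up to the factor \<open>h powr (- \<alpha>)\<close>, the kernel \<open>c\<^sub>m\<close> is the \<open>m\<close>-th Fourier coefficient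
  \<open>a\<^sub>m\<close> of the \<open>2\<pi>\<close>-periodic function \<open>\<bar>t\<bar> powr \<alpha>\<close> on \<open>[-\<pi>, \<pi>]\<close>. Integrating by parts twice away
  from the origin gives \<open>a\<^sub>m = O(m powr (-1 - \<alpha>)) + O(m powr -2)\<close>, so the Fourier series converges
  absolutely; its Abel means are Poisson integrals of \<open>\<bar>t\<bar> powr \<alpha>\<close> and tend to the function, so
  by Abel's theorem the series sums to \<open>\<bar>t\<bar> powr \<alpha>\<close> everywhere. Since \<open>h \<bar>\<xi>\<^sub>k\<bar>\<close> and
  \<open>2\<pi>k/N\<close> have the same cosines, the symbol samples are the series evaluated at the points
  \<open>2\<pi>k/N\<close>, and applying the inverse DFT, orthogonality of the \<open>N\<close>-th roots of unity collapses the
  series to the aliased sum \<open>\<Sum>\<^sub>l c\<^bsub>m+lN\<^esub>\<close>.\<close>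

section \<open>Decay of the cosine coefficients of a power\<close>

text \<open>The \<open>n\<close>-th Fourier coefficient of the even \<open>2\<pi>\<close>-periodic extension of \<open>\<phi>\<close> from \<open>[0, \<pi>]\<close>.\<close>

definition cos_coeff :: "(real \<Rightarrow> real) \<Rightarrow> int \<Rightarrow> real" where
  "cos_coeff \<phi> n = (1 / pi) * integral {0..pi} (\<lambda>t. \<phi> t * cos (of_int n * t))"

lemma cos_coeff_minus [simp]: "cos_coeff \<phi> (- n) = cos_coeff \<phi> n"
  by (simp add: cos_coeff_def)

lemma continuous_on_powr_const:
  fixes \<alpha> :: real
  assumes "0 < \<alpha>" "S \<subseteq> {0..}"
  shows "continuous_on S (\<lambda>t. t powr \<alpha>)"
  using assms by (intro continuous_on_powr' continuous_intros) auto

lemma has_integral_powr_cos_by_parts: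
  fixes \<alpha> x a b :: real
  assumes "0 < a" "a \<le> b" "x \<noteq> 0"
  defines "F \<equiv> \<lambda>t. t powr \<alpha> * sin (x * t) / x + \<alpha> * (t powr (\<alpha> - 1) * cos (x * t)) / x\<^sup>2"
  shows "((\<lambda>t. t powr \<alpha> * cos (x * t) + \<alpha> * (\<alpha> - 1) / x\<^sup>2 * (t powr (\<alpha> - 2) * cos (x * t)))
           has_integral F b - F a) {a..b}"
proof (rule fundamental_theorem_of_calculus)
  show "a \<le> b" by fact
  fix t assume "t \<in> {a..b}"
  then have t: "t > 0" using assms by auto
  have "(F has_real_derivative
      (\<alpha> * t powr (\<alpha> - 1) * sin (x * t) + cos (x * t) * x * t powr \<alpha>) / x
       + \<alpha> * ((\<alpha> - 1) * t powr (\<alpha> - 1 - 1) * cos (x * t) + - sin (x * t) * x * t powr (\<alpha> - 1)) / x\<^sup>2) (at t)"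
    unfolding F_def
    by (intro DERIV_add DERIV_cdivide DERIV_cmult DERIV_mult has_real_derivative_powr[OF t])
       (auto intro!: derivative_eq_intros)
  moreover have "(\<alpha> * t powr (\<alpha> - 1) * sin (x * t) + cos (x * t) * x * t powr \<alpha>) / x
       + \<alpha> * ((\<alpha> - 1) * t powr (\<alpha> - 1 - 1) * cos (x * t) + - sin (x * t) * x * t powr (\<alpha> - 1)) / x\<^sup>2
      = t powr \<alpha> * cos (x * t) + \<alpha> * (\<alpha> - 1) / x\<^sup>2 * (t powr (\<alpha> - 2) * cos (x * t))"
    using assms(3) by (simp add: field_simps power2_eq_square)
  ultimately show "(F has_vector_derivative
      t powr \<alpha> * cos (x * t) + \<alpha> * (\<alpha> - 1) / x\<^sup>2 * (t powr (\<alpha> - 2) * cos (x * t))) (at t within {a..b})"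
    by (simp add: has_real_derivative_iff_has_vector_derivative has_vector_derivative_at_within)
qed

lemma abs_integral_powr_cos_le_powr_diff:
  fixes \<alpha> x a b :: real
  assumes "0 < a" "a \<le> b"
  shows "\<bar>\<alpha> - 1\<bar> * \<bar>integral {a..b} (\<lambda>t. t powr (\<alpha> - 2) * cos (x * t))\<bar>
           \<le> \<bar>b powr (\<alpha> - 1) - a powr (\<alpha> - 1)\<bar>"
proof -
  have cont: "continuous_on {a..b} (\<lambda>t. t powr (\<alpha> - 2))"
    using assms by (intro continuous_intros) auto
  have antideriv: "((\<lambda>t. (\<alpha> - 1) * t powr (\<alpha> - 2)) has_integral b powr (\<alpha> - 1) - a powr (\<alpha> - 1)) {a..b}"
  proof (rule fundamental_theorem_of_calculus)
    fix t assume "t \<in> {a..b}"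
    then have "((\<lambda>t. t powr (\<alpha> - 1)) has_real_derivative (\<alpha> - 1) * t powr (\<alpha> - 1 - 1)) (at t)"
      using assms by (intro has_real_derivative_powr) auto
    then show "((\<lambda>t. t powr (\<alpha> - 1)) has_vector_derivative (\<alpha> - 1) * t powr (\<alpha> - 2)) (at t within {a..b})"
      by (simp add: has_real_derivative_iff_has_vector_derivative has_vector_derivative_at_within)
  qed (use assms in auto)
  have "norm (integral {a..b} (\<lambda>t. t powr (\<alpha> - 2) * cos (x * t))) \<le> integral {a..b} (\<lambda>t. t powr (\<alpha> - 2))"
    using assms
    by (intro integral_norm_bound_integral integrable_continuous_interval cont continuous_intros)
       (auto simp: abs_mult intro!: mult_left_le)
  then have "\<bar>\<alpha> - 1\<bar> * \<bar>integral {a..b} (\<lambda>t. t powr (\<alpha> - 2) * cos (x * t))\<bar>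
      \<le> \<bar>(\<alpha> - 1) * integral {a..b} (\<lambda>t. t powr (\<alpha> - 2))\<bar>"
    by (simp add: abs_mult mult_left_mono)
  also have "(\<alpha> - 1) * integral {a..b} (\<lambda>t. t powr (\<alpha> - 2)) = b powr (\<alpha> - 1) - a powr (\<alpha> - 1)"
    using antideriv integral_mult_right by (metis integral_unique)
  finally show ?thesis .
qed

text \<open>Cutting at \<open>\<pi>/n\<close> keeps clear of the singularity of \<open>t powr (\<alpha> - 2)\<close> at 0, and the boundary
  terms \<open>t powr \<alpha> * sin (n * t)\<close> vanish at both ends of \<open>[\<pi>/n, \<pi>]\<close>.\<close>

lemma abs_integral_powr_cos_tail_le:
  fixes \<alpha> :: real and n :: nat
  assumes "0 < \<alpha>" "n \<ge> 1"
  defines "\<delta> \<equiv> pi / n"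
  shows "\<bar>integral {\<delta>..pi} (\<lambda>t. t powr \<alpha> * cos (real n * t))\<bar>
           \<le> 2 * \<alpha> * (pi powr (\<alpha> - 1) + \<delta> powr (\<alpha> - 1)) / (real n)\<^sup>2"
proof -
  define F where "F \<equiv> \<lambda>t. t powr \<alpha> * sin (real n * t) / real n
                              + \<alpha> * (t powr (\<alpha> - 1) * cos (real n * t)) / (real n)\<^sup>2"
  define c where "c = \<alpha> * (\<alpha> - 1) / (real n)\<^sup>2"
  define J where "J = integral {\<delta>..pi} (\<lambda>t. t powr (\<alpha> - 2) * cos (real n * t))"
  have \<delta>: "0 < \<delta>" "\<delta> \<le> pi" and n: "real n \<ge> 1"
    using assms by (auto simp: \<delta>_def field_simps)
  have parts: "((\<lambda>t. t powr \<alpha> * cos (real n * t) + c * (t powr (\<alpha> - 2) * cos (real n * t)))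
                  has_integral F pi - F \<delta>) {\<delta>..pi}"
    unfolding c_def F_def by (rule has_integral_powr_cos_by_parts) (use \<delta> n in auto)
  have "((\<lambda>t. c * (t powr (\<alpha> - 2) * cos (real n * t))) has_integral c * J) {\<delta>..pi}"
    unfolding J_def using \<delta>
    by (intro has_integral_mult_right integrable_integral integrable_continuous_interval continuous_intros) auto
  from has_integral_diff[OF parts this]
  have "integral {\<delta>..pi} (\<lambda>t. t powr \<alpha> * cos (real n * t)) = F pi - F \<delta> - c * J"
    by (simp add: integral_unique)
  moreover have "\<bar>F pi\<bar> \<le> \<alpha> * pi powr (\<alpha> - 1) / (real n)\<^sup>2" "\<bar>F \<delta>\<bar> \<le> \<alpha> * \<delta> powr (\<alpha> - 1) / (real n)\<^sup>2"
    using assms \<delta> by (auto simp: F_def abs_mult divide_right_mono mult_left_le mult.commute[of _ pi])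
  moreover have "\<bar>c * J\<bar> \<le> \<alpha> * (pi powr (\<alpha> - 1) + \<delta> powr (\<alpha> - 1)) / (real n)\<^sup>2"
  proof -
    have "\<bar>c * J\<bar> = \<alpha> / (real n)\<^sup>2 * (\<bar>\<alpha> - 1\<bar> * \<bar>J\<bar>)"
      using assms by (simp add: c_def abs_mult)
    also have "\<dots> \<le> \<alpha> / (real n)\<^sup>2 * \<bar>pi powr (\<alpha> - 1) - \<delta> powr (\<alpha> - 1)\<bar>"
      unfolding J_def using assms \<delta> by (intro mult_left_mono abs_integral_powr_cos_le_powr_diff) auto
    also have "\<dots> \<le> \<alpha> / (real n)\<^sup>2 * (pi powr (\<alpha> - 1) + \<delta> powr (\<alpha> - 1))"
    proof -
      have "\<bar>pi powr (\<alpha> - 1) - \<delta> powr (\<alpha> - 1)\<bar> \<le> pi powr (\<alpha> - 1) + \<delta> powr (\<alpha> - 1)"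
        using powr_ge_zero[of pi "\<alpha> - 1"] powr_ge_zero[of \<delta> "\<alpha> - 1"] by arith
      then show ?thesis using assms by (intro mult_left_mono) auto
    qed
    finally show ?thesis by simp
  qed
  ultimately have "\<bar>integral {\<delta>..pi} (\<lambda>t. t powr \<alpha> * cos (real n * t))\<bar>
      \<le> \<alpha> * pi powr (\<alpha> - 1) / (real n)\<^sup>2 + \<alpha> * \<delta> powr (\<alpha> - 1) / (real n)\<^sup>2
        + \<alpha> * (pi powr (\<alpha> - 1) + \<delta> powr (\<alpha> - 1)) / (real n)\<^sup>2"
    by arith
  also have "\<dots> = 2 * \<alpha> * (pi powr (\<alpha> - 1) + \<delta> powr (\<alpha> - 1)) / (real n)\<^sup>2"
    by (simp only: add_divide_distrib[symmetric]) (simp add: algebra_simps)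
  finally show ?thesis .
qed

lemma abs_integral_powr_cos_head_le:
  fixes \<alpha> \<delta> x :: real
  assumes "0 < \<alpha>" "0 \<le> \<delta>"
  shows "\<bar>integral {0..\<delta>} (\<lambda>t. t powr \<alpha> * cos (x * t))\<bar> \<le> \<delta> * \<delta> powr \<alpha>"
proof -
  have "norm (integral {0..\<delta>} (\<lambda>t. t powr \<alpha> * cos (x * t))) \<le> integral {0..\<delta>} (\<lambda>_. \<delta> powr \<alpha>)"
  proof (rule integral_norm_bound_integral)
    show "(\<lambda>t. t powr \<alpha> * cos (x * t)) integrable_on {0..\<delta>}"
      using assms by (intro integrable_continuous_interval continuous_intros continuous_on_powr_const) auto
    fix t assume t: "t \<in> {0..\<delta>}"
    have "norm (t powr \<alpha> * cos (x * t)) \<le> t powr \<alpha>"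
      by (auto simp: abs_mult intro!: mult_left_le)
    also have "\<dots> \<le> \<delta> powr \<alpha>"
      using t assms by (auto intro!: powr_mono2)
    finally show "norm (t powr \<alpha> * cos (x * t)) \<le> \<delta> powr \<alpha>" .
  qed auto
  then show ?thesis using assms by simp
qed

lemma abs_cos_coeff_powr_le:
  fixes \<alpha> :: real and n :: nat
  assumes "0 < \<alpha>" "n \<ge> 1"
  shows "\<bar>cos_coeff (\<lambda>t. t powr \<alpha>) (int n)\<bar>
           \<le> (pi powr \<alpha> + 2 * \<alpha> * pi powr (\<alpha> - 2)) * (real n powr (- 1 - \<alpha>) + real n powr (- 2))"
proof -
  define \<delta> where "\<delta> = pi / n"
  define f where "f = (\<lambda>t. t powr \<alpha> * cos (real n * t))"
  have n: "real n \<ge> 1" and \<delta>: "0 < \<delta>" "\<delta> \<le> pi"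
    using assms by (auto simp: \<delta>_def field_simps)
  have "f integrable_on {0..pi}"
    unfolding f_def using assms by (intro integrable_continuous_interval continuous_intros continuous_on_powr_const) auto
  then have "integral {0..pi} f = integral {0..\<delta>} f + integral {\<delta>..pi} f"
    using \<delta> by (simp add: Henstock_Kurzweil_Integration.integral_combine)
  moreover have "\<bar>integral {0..\<delta>} f\<bar> \<le> \<delta> * \<delta> powr \<alpha>"
    unfolding f_def by (rule abs_integral_powr_cos_head_le) (use assms \<delta> in auto)
  moreover have "\<bar>integral {\<delta>..pi} f\<bar> \<le> 2 * \<alpha> * (pi powr (\<alpha> - 1) + \<delta> powr (\<alpha> - 1)) / (real n)\<^sup>2"
    unfolding f_def \<delta>_def by (rule abs_integral_powr_cos_tail_le[OF assms])
  ultimately have "\<bar>integral {0..pi} f\<bar> \<le> \<delta> * \<delta> powr \<alpha> + 2 * \<alpha> * (pi powr (\<alpha> - 1) + \<delta> powr (\<alpha> - 1)) / (real n)\<^sup>2"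
    by linarith
  also have "\<dots> = \<delta> * \<delta> powr \<alpha> + 2 * \<alpha> * pi powr (\<alpha> - 1) * (1 / (real n)\<^sup>2)
                   + 2 * \<alpha> * (\<delta> powr (\<alpha> - 1) / (real n)\<^sup>2)"
    using n by (simp add: field_simps)
  also have "\<dots> = pi * (pi powr \<alpha> * n powr (- 1 - \<alpha>) + 2 * \<alpha> * pi powr (\<alpha> - 2) * n powr (- 2)
                       + 2 * \<alpha> * pi powr (\<alpha> - 2) * n powr (- 1 - \<alpha>))"
  proof -
    have "\<delta> * \<delta> powr \<alpha> = pi powr (1 + \<alpha>) * n powr (- 1 - \<alpha>)"
      "\<delta> powr (\<alpha> - 1) / (real n)\<^sup>2 = pi powr (\<alpha> - 1) * n powr (- 1 - \<alpha>)"
      "1 / (real n)\<^sup>2 = n powr (- 2)"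
      using n unfolding \<delta>_def
      by (simp_all add: powr_divide powr_add powr_minus powr_diff field_simps power2_eq_square)
    moreover have "pi powr (\<alpha> - 1) = pi * pi powr (\<alpha> - 2)" "pi powr (1 + \<alpha>) = pi * pi powr \<alpha>"
      using powr_add[of pi 1 "\<alpha> - 2"] powr_add[of pi 1 \<alpha>] by simp_all
    ultimately show ?thesis
      by (simp add: algebra_simps)
  qed
  finally have "\<bar>cos_coeff (\<lambda>t. t powr \<alpha>) (int n)\<bar>
      \<le> pi powr \<alpha> * n powr (- 1 - \<alpha>) + 2 * \<alpha> * pi powr (\<alpha> - 2) * n powr (- 2)
        + 2 * \<alpha> * pi powr (\<alpha> - 2) * n powr (- 1 - \<alpha>)"
    by (simp add: cos_coeff_def f_def abs_mult field_simps)
  also have "\<dots> \<le> (pi powr \<alpha> + 2 * \<alpha> * pi powr (\<alpha> - 2)) * (n powr (- 1 - \<alpha>) + n powr (- 2))"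
    by (simp add: algebra_simps)
  finally show ?thesis .
qed

lemma has_sum_int_split:
  fixes f :: "int \<Rightarrow> 'a::topological_comm_monoid_add"
  assumes "((\<lambda>k. f (int k)) has_sum A) UNIV" and "((\<lambda>k. f (- int (Suc k))) has_sum B) UNIV"
  shows "(f has_sum A + B) UNIV"
proof -
  have "(f has_sum A) (range int)" "(f has_sum B) (range (\<lambda>k. - int (Suc k)))"
    using assms by (simp_all add: has_sum_reindex inj_on_def comp_def)
  then have "(f has_sum A + B) (range int \<union> range (\<lambda>k. - int (Suc k)))"
    by (rule has_sum_Un_disjoint) auto
  moreover have "x \<in> range int \<union> range (\<lambda>k. - int (Suc k))" for x :: int
    by (cases x rule: int_cases) auto
  ultimately show ?thesis
    by (metis UNIV_eq_I)
qed

lemma even_summable_on_int: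
  fixes g :: "int \<Rightarrow> real"
  assumes nonneg: "\<And>n. 0 \<le> g n" and even: "\<And>n. g (- n) = g n" and summable: "summable (\<lambda>k. g (int k))"
  shows "g summable_on UNIV"
proof -
  have "summable (\<lambda>k. g (int (Suc k)))"
    using summable by (subst summable_Suc_iff)
  then have "summable (\<lambda>k. g (- int (Suc k)))"
    by (simp only: even)
  with summable have "((\<lambda>k. g (int k)) has_sum (\<Sum>k. g (int k))) UNIV"
    and "((\<lambda>k. g (- int (Suc k))) has_sum (\<Sum>k. g (- int (Suc k)))) UNIV"
    using nonneg by (auto intro!: norm_summable_imp_has_sum)
  then show ?thesis
    using has_sum_int_split summable_on_def by blast
qed

lemma cos_coeff_powr_abs_summable:
  fixes \<alpha> :: real
  assumes "0 < \<alpha>"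
  shows "(\<lambda>n. norm (cos_coeff (\<lambda>t. t powr \<alpha>) n)) summable_on UNIV"
proof (rule even_summable_on_int)
  define C where "C = pi powr \<alpha> + 2 * \<alpha> * pi powr (\<alpha> - 2)"
  have "summable (\<lambda>k. C * (real k powr (- 1 - \<alpha>) + real k powr (- 2)))"
    using assms by (intro summable_mult summable_add) (auto simp: summable_real_powr_iff)
  moreover have "\<forall>\<^sub>F k in sequentially. norm (norm (cos_coeff (\<lambda>t. t powr \<alpha>) (int k)))
                   \<le> C * (real k powr (- 1 - \<alpha>) + real k powr (- 2))"
    unfolding C_def eventually_sequentially using abs_cos_coeff_powr_le[OF assms] by auto
  ultimately show "summable (\<lambda>k. norm (cos_coeff (\<lambda>t. t powr \<alpha>) (int k)))"
    by (rule summable_comparison_test_ev[rotated])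
qed auto

section \<open>The Poisson kernel\<close>

definition poisson_kernel :: "real \<Rightarrow> real \<Rightarrow> real" where
  "poisson_kernel r s = (1 - r\<^sup>2) / (1 - 2 * r * cos s + r\<^sup>2)"

lemma poisson_kernel_denom_eq:
  fixes r s :: real
  shows "1 - 2 * r * cos s + r\<^sup>2 = (1 - r)\<^sup>2 + 2 * r * (1 - cos s)"
  by (simp add: power2_eq_square algebra_simps)

lemma poisson_kernel_denom_pos:
  fixes r s :: real
  assumes "0 \<le> r" "r < 1"
  shows "0 < 1 - 2 * r * cos s + r\<^sup>2"
  unfolding poisson_kernel_denom_eq using assms by (intro add_pos_nonneg) auto

lemma poisson_kernel_nonneg:
  fixes r s :: real
  assumes "0 \<le> r" "r < 1"
  shows "0 \<le> poisson_kernel r s"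
  using poisson_kernel_denom_pos[OF assms, of s] assms unfolding poisson_kernel_def
  by (intro divide_nonneg_pos) (auto simp: power_le_one abs_square_le_1)

lemma poisson_kernel_le:
  fixes r s \<eta> :: real
  assumes "0 < r" "r < 1" "0 < \<eta>" "cos s \<le> 1 - \<eta>\<^sup>2 / 2"
  shows "poisson_kernel r s \<le> (1 - r\<^sup>2) / (r * \<eta>\<^sup>2)"
proof -
  have "r * \<eta>\<^sup>2 \<le> r * (2 * (1 - cos s))"
    using assms by (intro mult_left_mono) auto
  moreover have "r * (2 * (1 - cos s)) = 2 * r * (1 - cos s)"
    by simp
  ultimately have "r * \<eta>\<^sup>2 \<le> 1 - 2 * r * cos s + r\<^sup>2"
    unfolding poisson_kernel_denom_eq using zero_le_power2[of "1 - r"] by linarith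
  moreover have "0 \<le> 1 - r\<^sup>2"
    using assms by (simp add: power_le_one abs_square_le_1)
  moreover have "0 < (1 - 2 * r * cos s + r\<^sup>2) * (r * \<eta>\<^sup>2)"
    using assms poisson_kernel_denom_pos[of r s] by simp
  ultimately show ?thesis
    unfolding poisson_kernel_def using assms by (intro divide_left_mono) auto
qed

lemma continuous_on_poisson_kernel [continuous_intros]:
  fixes r :: real and f :: "'a::t2_space \<Rightarrow> real"
  assumes "0 \<le> r" "r < 1" "continuous_on S f"
  shows "continuous_on S (\<lambda>t. poisson_kernel r (f t))"
  unfolding poisson_kernel_def using assms poisson_kernel_denom_pos[OF assms(1,2)]
  by (intro continuous_intros) (auto simp: less_imp_neq[symmetric])

lemma sums_power_mult_cos:
  fixes r s :: real
  assumes "0 \<le> r" "r < 1"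
  shows "(\<lambda>k. r ^ k * cos (real k * s)) sums ((1 - r * cos s) / (1 - 2 * r * cos s + r\<^sup>2))"
proof -
  define z where "z = complex_of_real r * cis s"
  have "norm z < 1"
    using assms by (simp add: z_def norm_mult)
  then have "(\<lambda>k. Re (z ^ k)) sums Re (1 / (1 - z))"
    by (intro sums_Re) (simp add: geometric_sums)
  moreover have "Re (z ^ k) = r ^ k * cos (real k * s)" for k
    by (simp add: z_def power_mult_distrib Complex.DeMoivre)
  moreover have "(1 - r * cos s)\<^sup>2 + (r * sin s)\<^sup>2 = 1 - 2 * r * cos s + r\<^sup>2 * ((sin s)\<^sup>2 + (cos s)\<^sup>2)"
    by (simp add: power2_eq_square algebra_simps del: sin_cos_squared_add sin_cos_squared_add2 sin_cos_squared_add3)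
  then have "Re (1 / (1 - z)) = (1 - r * cos s) / (1 - 2 * r * cos s + r\<^sup>2)"
    by (simp add: Re_divide z_def)
  ultimately show ?thesis by simp
qed

lemma has_sum_poisson_kernel:
  fixes r s :: real
  assumes "0 \<le> r" "r < 1"
  shows "((\<lambda>n::int. r ^ nat \<bar>n\<bar> * cos (of_int n * s)) has_sum poisson_kernel r s) UNIV"
proof -
  define Q where "Q = (1 - r * cos s) / (1 - 2 * r * cos s + r\<^sup>2)"
  have summable: "summable (\<lambda>k. norm (r ^ k * cos (real k * s)))"
    using assms
    by (intro summable_comparison_test[OF _ summable_geometric[of r]])
       (auto simp: abs_mult intro!: exI[of _ 0] mult_left_le)
  have sums: "(\<lambda>k. r ^ k * cos (real k * s)) sums Q"
    unfolding Q_def using assms by (rule sums_power_mult_cos)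
  have "((\<lambda>k. r ^ k * cos (real k * s)) has_sum Q) UNIV"
    by (rule norm_summable_imp_has_sum[OF summable sums])
  moreover have "((\<lambda>k. r ^ Suc k * cos (real (Suc k) * s)) has_sum Q - 1) UNIV"
  proof (rule norm_summable_imp_has_sum)
    show "summable (\<lambda>k. norm (r ^ Suc k * cos (real (Suc k) * s)))"
      using summable summable_Suc_iff[of "\<lambda>k. norm (r ^ k * cos (real k * s))"] by simp
    show "(\<lambda>k. r ^ Suc k * cos (real (Suc k) * s)) sums (Q - 1)"
      using sums sums_Suc_iff[of "\<lambda>k. r ^ k * cos (real k * s)" "Q - 1"] by simp
  qed
  ultimately have "((\<lambda>n::int. r ^ nat \<bar>n\<bar> * cos (of_int n * s)) has_sum Q + (Q - 1)) UNIV"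
    by (intro has_sum_int_split) (simp_all del: of_nat_Suc)
  moreover have "Q + (Q - 1) = poisson_kernel r s"
    using poisson_kernel_denom_pos[OF assms, of s] unfolding Q_def poisson_kernel_def
    by (simp add: field_simps)
  ultimately show ?thesis by simp
qed

text \<open>The Abel means \<open>\<Sum>n. r ^ nat \<bar>n\<bar> * cos_coeff \<phi> n * cos (n * \<theta>)\<close> are integrals of \<open>\<phi>\<close>
  against this kernel.\<close>

definition cos_poisson_kernel :: "real \<Rightarrow> real \<Rightarrow> real \<Rightarrow> real" where
  "cos_poisson_kernel r \<theta> t = (poisson_kernel r (t - \<theta>) + poisson_kernel r (t + \<theta>)) / 2"

lemma has_sum_cos_poisson_kernel:
  fixes r \<theta> t :: real
  assumes "0 \<le> r" "r < 1"
  shows "((\<lambda>n::int. r ^ nat \<bar>n\<bar> * cos (of_int n * \<theta>) * cos (of_int n * t)) has_sum cos_poisson_kernel r \<theta> t) UNIV"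
proof -
  have "((\<lambda>n::int. (r ^ nat \<bar>n\<bar> * cos (of_int n * (t - \<theta>)) + r ^ nat \<bar>n\<bar> * cos (of_int n * (t + \<theta>))) / 2)
      has_sum cos_poisson_kernel r \<theta> t) UNIV"
    unfolding cos_poisson_kernel_def
    by (intro has_sum_divide_const has_sum_add has_sum_poisson_kernel assms)
  moreover have "(r ^ nat \<bar>n\<bar> * cos (of_int n * (t - \<theta>)) + r ^ nat \<bar>n\<bar> * cos (of_int n * (t + \<theta>))) / 2
      = r ^ nat \<bar>n\<bar> * cos (of_int n * \<theta>) * cos (of_int n * t)" for n :: int
    by (simp add: cos_diff cos_add algebra_simps)
  ultimately show ?thesis by simp
qed

lemma cos_poisson_kernel_nonneg:
  assumes "0 \<le> r" "r < 1"
  shows "0 \<le> cos_poisson_kernel r \<theta> t"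
  unfolding cos_poisson_kernel_def using poisson_kernel_nonneg[OF assms] by simp

lemma continuous_on_cos_poisson_kernel:
  assumes "0 \<le> r" "r < 1"
  shows "continuous_on S (cos_poisson_kernel r \<theta>)"
  unfolding cos_poisson_kernel_def[abs_def] using assms by (intro continuous_intros) auto

lemma has_sum_integral_swap:
  fixes f :: "'i \<Rightarrow> real \<Rightarrow> real" and M :: "'i \<Rightarrow> real"
  assumes cont: "\<And>n. continuous_on {a..b} (f n)"
    and bound: "\<And>n t. t \<in> {a..b} \<Longrightarrow> norm (f n t) \<le> M n" and summable: "M summable_on UNIV"
    and has_sum: "\<And>t. t \<in> {a..b} \<Longrightarrow> ((\<lambda>n. f n t) has_sum S t) UNIV"
  shows "((\<lambda>n. integral {a..b} (f n)) has_sum integral {a..b} S) UNIV"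
proof -
  have "uniform_limit {a..b} (\<lambda>X t. \<Sum>n\<in>X. f n t) S (finite_subsets_at_top UNIV)"
    using bound has_sum summable by (rule Weierstrass_m_test_general') auto
  then obtain I J where I: "\<And>X. ((\<lambda>t. \<Sum>n\<in>X. f n t) has_integral I X) {a..b}"
    and J: "(S has_integral J) {a..b}" and lim: "(I \<longlongrightarrow> J) (finite_subsets_at_top UNIV)"
    using cont by (metis uniform_limit_integral continuous_on_sum finite_subsets_at_top_neq_bot)
  have "((\<lambda>t. \<Sum>n\<in>X. f n t) has_integral (\<Sum>n\<in>X. integral {a..b} (f n))) {a..b}" if "finite X" for X
    using that cont by (intro has_integral_sum integrable_integral integrable_continuous_interval)
  then have "\<forall>\<^sub>F X in finite_subsets_at_top UNIV. I X = (\<Sum>n\<in>X. integral {a..b} (f n))"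
    using I by (blast intro: has_integral_unique)
  with lim have "((\<lambda>X. \<Sum>n\<in>X. integral {a..b} (f n)) \<longlongrightarrow> J) (finite_subsets_at_top UNIV)"
    by (rule Lim_transform_eventually)
  then show ?thesis
    using J by (simp add: has_sum_def integral_unique)
qed

lemma has_sum_abel_mean:
  fixes \<phi> :: "real \<Rightarrow> real"
  assumes cont: "continuous_on {0..pi} \<phi>" and r: "0 \<le> r" "r < 1"
  shows "((\<lambda>n. r ^ nat \<bar>n\<bar> * (cos_coeff \<phi> n * cos (of_int n * \<theta>)))
           has_sum (1 / pi) * integral {0..pi} (\<lambda>t. \<phi> t * cos_poisson_kernel r \<theta> t)) UNIV"
proof -
  obtain B where B: "\<And>t. t \<in> {0..pi} \<Longrightarrow> norm (\<phi> t) \<le> B"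
    using continuous_on_compact_bound[OF compact_Icc cont] by metis
  define f where "f n = (\<lambda>t. r ^ nat \<bar>n\<bar> * cos (of_int n * \<theta>) * (\<phi> t * cos (of_int n * t)))" for n :: int
  have "((\<lambda>n. integral {0..pi} (f n)) has_sum integral {0..pi} (\<lambda>t. \<phi> t * cos_poisson_kernel r \<theta> t)) UNIV"
  proof (rule has_sum_integral_swap)
    show "continuous_on {0..pi} (f n)" for n
      unfolding f_def by (intro continuous_intros cont)
    show "norm (f n t) \<le> B * r ^ nat \<bar>n\<bar>" if "t \<in> {0..pi}" for n t
    proof -
      have "norm (f n t) = r ^ nat \<bar>n\<bar> * (\<bar>cos (of_int n * \<theta>)\<bar> * (norm (\<phi> t) * \<bar>cos (of_int n * t)\<bar>))"
        using r by (simp add: f_def abs_mult)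
      also have "\<dots> \<le> r ^ nat \<bar>n\<bar> * (1 * (B * 1))"
        using B[OF that] r by (intro mult_left_mono mult_mono) auto
      finally show ?thesis by (simp add: mult.commute)
    qed
    have "(\<lambda>n. r ^ nat \<bar>n\<bar>) summable_on UNIV"
      using has_sum_poisson_kernel[OF r, of 0] by (auto simp: summable_on_def)
    then show "(\<lambda>n. B * r ^ nat \<bar>n\<bar>) summable_on UNIV"
      by (rule summable_on_cmult_right)
    show "((\<lambda>n. f n t) has_sum \<phi> t * cos_poisson_kernel r \<theta> t) UNIV" for t
      using has_sum_cmult_right[OF has_sum_cos_poisson_kernel[OF r], of "\<phi> t" \<theta> t]
      by (simp add: f_def algebra_simps)
  qed
  then have "((\<lambda>n. (1 / pi) * integral {0..pi} (f n))
      has_sum (1 / pi) * integral {0..pi} (\<lambda>t. \<phi> t * cos_poisson_kernel r \<theta> t)) UNIV"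
    by (rule has_sum_cmult_right)
  moreover have "(1 / pi) * integral {0..pi} (f n) = r ^ nat \<bar>n\<bar> * (cos_coeff \<phi> n * cos (of_int n * \<theta>))" for n
    by (simp add: f_def cos_coeff_def mult.assoc)
  ultimately show ?thesis by simp
qed

lemma cos_coeff_one: "cos_coeff (\<lambda>_. 1) n = (if n = 0 then 1 else 0)"
proof (cases "n = 0")
  case False
  have "((\<lambda>t. cos (of_int n * t)) has_integral sin (of_int n * pi) / of_int n - sin (of_int n * 0) / of_int n) {0..pi}"
  proof (rule fundamental_theorem_of_calculus)
    fix t :: real
    have "((\<lambda>t. sin (of_int n * t) / of_int n) has_real_derivative cos (of_int n * t) * of_int n / of_int n) (at t)"
      by (auto intro!: derivative_eq_intros)
    then show "((\<lambda>t. sin (of_int n * t) / of_int n) has_vector_derivative cos (of_int n * t)) (at t within {0..pi})"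
      using False by (simp add: has_real_derivative_iff_has_vector_derivative has_vector_derivative_at_within)
  qed simp
  moreover have "sin (of_int n * pi) = 0"
    by (metis sin_npi_int mult.commute)
  ultimately show ?thesis
    using False by (simp add: cos_coeff_def integral_unique)
qed (simp add: cos_coeff_def)

lemma integral_cos_poisson_kernel:
  assumes "0 \<le> r" "r < 1"
  shows "integral {0..pi} (cos_poisson_kernel r \<theta>) = pi"
proof -
  have "((\<lambda>n. r ^ nat \<bar>n\<bar> * (cos_coeff (\<lambda>_. 1) n * cos (of_int n * \<theta>))) has_sum 1) UNIV"
    by (rule has_sum_finite_neutralI[of "{0}"]) (auto simp: cos_coeff_one)
  with has_sum_abel_mean[OF continuous_on_const assms, of 1 \<theta>]
  have "(1 / pi) * integral {0..pi} (\<lambda>t. 1 * cos_poisson_kernel r \<theta> t) = 1"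
    by (rule has_sum_unique)
  then show ?thesis by simp
qed

section \<open>Pointwise convergence of absolutely convergent cosine series\<close>

lemma cos_diff_square_le:
  fixes t u :: real
  shows "(cos t - cos u)\<^sup>2 \<le> 2 - 2 * cos (t - u)"
proof -
  have "(cos t - cos u)\<^sup>2 + (sin t - sin u)\<^sup>2 = 2 - 2 * cos (t - u)"
    by (simp add: power2_eq_square cos_diff algebra_simps)
  then show ?thesis
    by (metis le_add_same_cancel1 zero_le_power2)
qed

text \<open>Either \<open>t\<close> is close to \<open>\<theta>\<close>, or \<open>s\<close> is bounded away from \<open>2\<pi>\<int>\<close> and the kernel is small.\<close>

lemma mult_poisson_kernel_le:
  fixes r s d C \<epsilon> \<eta> :: real
  assumes r: "0 < r" "r < 1" and \<eta>: "0 < \<eta>" and "0 < \<epsilon>" "0 \<le> d" "d \<le> C"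
    and near: "\<bar>cos t - cos \<theta>\<bar> < \<eta> \<Longrightarrow> d < \<epsilon>"
    and s: "(cos t - cos \<theta>)\<^sup>2 \<le> 2 - 2 * cos s"
  shows "d * poisson_kernel r s \<le> \<epsilon> * poisson_kernel r s + C * ((1 - r\<^sup>2) / (r * \<eta>\<^sup>2))"
proof -
  have P: "0 \<le> poisson_kernel r s"
    using poisson_kernel_nonneg r by simp
  have q: "0 \<le> (1 - r\<^sup>2) / (r * \<eta>\<^sup>2)"
    using r by (simp add: power_le_one abs_square_le_1)
  have "0 \<le> \<epsilon> * poisson_kernel r s" "0 \<le> C * ((1 - r\<^sup>2) / (r * \<eta>\<^sup>2))"
    using assms P q by (intro mult_nonneg_nonneg; simp)+
  moreover consider "cos s \<le> 1 - \<eta>\<^sup>2 / 2" | "\<bar>cos t - cos \<theta>\<bar> < \<eta>"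
  proof (cases "cos s \<le> 1 - \<eta>\<^sup>2 / 2")
    case False
    then have "\<bar>cos t - cos \<theta>\<bar>\<^sup>2 < \<eta>\<^sup>2"
      using s by simp
    then have "\<bar>cos t - cos \<theta>\<bar> < \<eta>"
      by (rule power_less_imp_less_base) (use \<eta> in simp)
    then show ?thesis
      by (rule that)
  qed
  then have "d * poisson_kernel r s \<le> \<epsilon> * poisson_kernel r s \<or> d * poisson_kernel r s \<le> C * ((1 - r\<^sup>2) / (r * \<eta>\<^sup>2))"
  proof cases
    case 1
    then show ?thesis
      using assms P by (intro disjI2 mult_mono poisson_kernel_le) auto
  next
    case 2
    then show ?thesis
      using near P by (intro disjI1 mult_right_mono) auto
  qed
  ultimately show ?thesis
    by linarith
qed

lemma mult_cos_poisson_kernel_eq: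
  "c * cos_poisson_kernel r \<theta> t = (c * poisson_kernel r (t - \<theta>) + c * poisson_kernel r (t + \<theta>)) / 2"
  by (simp add: cos_poisson_kernel_def field_simps)

lemma mult_cos_poisson_kernel_le:
  fixes r d C \<epsilon> \<eta> :: real
  assumes "0 < r" "r < 1" "0 < \<eta>" "0 < \<epsilon>" "0 \<le> d" "d \<le> C"
    and near: "\<bar>cos t - cos \<theta>\<bar> < \<eta> \<Longrightarrow> d < \<epsilon>"
  shows "d * cos_poisson_kernel r \<theta> t \<le> \<epsilon> * cos_poisson_kernel r \<theta> t + C * ((1 - r\<^sup>2) / (r * \<eta>\<^sup>2))"
proof -
  have bound: "d * poisson_kernel r s \<le> \<epsilon> * poisson_kernel r s + C * ((1 - r\<^sup>2) / (r * \<eta>\<^sup>2))"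
    if "(cos t - cos \<theta>)\<^sup>2 \<le> 2 - 2 * cos s" for s
    by (rule mult_poisson_kernel_le[where t = t and \<theta> = \<theta>]) (use assms that in auto)
  have "(cos t - cos \<theta>)\<^sup>2 \<le> 2 - 2 * cos (t - \<theta>)" "(cos t - cos \<theta>)\<^sup>2 \<le> 2 - 2 * cos (t + \<theta>)"
    using cos_diff_square_le[of t \<theta>] cos_diff_square_le[of t "- \<theta>"] by simp_all
  moreover have "x\<^sub>1 \<le> y\<^sub>1 + c \<Longrightarrow> x\<^sub>2 \<le> y\<^sub>2 + c \<Longrightarrow> (x\<^sub>1 + x\<^sub>2) / 2 \<le> (y\<^sub>1 + y\<^sub>2) / 2 + c"
    for x\<^sub>1 x\<^sub>2 y\<^sub>1 y\<^sub>2 c :: real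
    by (simp add: field_simps)
  ultimately show ?thesis
    unfolding mult_cos_poisson_kernel_eq using bound by blast
qed

lemma abel_mean_error_le:
  fixes \<phi> :: "real \<Rightarrow> real"
  assumes cont: "continuous_on {0..pi} \<phi>" and B: "\<And>t. t \<in> {0..pi} \<Longrightarrow> \<bar>\<phi> t\<bar> \<le> B"
    and \<theta>: "\<theta> \<in> {0..pi}" and r: "0 < r" "r < 1" and \<eta>: "0 < \<eta>" and \<epsilon>: "0 < \<epsilon>"
    and near: "\<And>t. t \<in> {0..pi} \<Longrightarrow> \<bar>cos t - cos \<theta>\<bar> < \<eta> \<Longrightarrow> \<bar>\<phi> t - \<phi> \<theta>\<bar> < \<epsilon>"
  shows "\<bar>(1 / pi) * integral {0..pi} (\<lambda>t. \<phi> t * cos_poisson_kernel r \<theta> t) - \<phi> \<theta>\<bar>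
           \<le> \<epsilon> + 2 * B * ((1 - r\<^sup>2) / (r * \<eta>\<^sup>2))"
proof -
  define K where "K = cos_poisson_kernel r \<theta>"
  define q where "q = (1 - r\<^sup>2) / (r * \<eta>\<^sup>2)"
  have contK: "continuous_on {0..pi} K"
    unfolding K_def using r by (intro continuous_on_cos_poisson_kernel) auto
  have intK: "integral {0..pi} K = pi"
    unfolding K_def using r by (intro integral_cos_poisson_kernel) auto
  have "(\<lambda>t. \<phi> t * K t) integrable_on {0..pi}"
    using cont contK by (intro integrable_continuous_interval continuous_on_mult)
  moreover have "(\<lambda>t. \<phi> \<theta> * K t) integrable_on {0..pi}"
    by (rule integrable_on_mult_right[OF integrable_continuous_interval[OF contK]])
  ultimately have "integral {0..pi} (\<lambda>t. (\<phi> t - \<phi> \<theta>) * K t) = integral {0..pi} (\<lambda>t. \<phi> t * K t) - \<phi> \<theta> * pi"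
    using intK by (simp add: left_diff_distrib integral_diff)
  moreover have "\<bar>integral {0..pi} (\<lambda>t. (\<phi> t - \<phi> \<theta>) * K t)\<bar> \<le> integral {0..pi} (\<lambda>t. \<epsilon> * K t + 2 * B * q)"
  proof -
    have "\<bar>\<phi> t - \<phi> \<theta>\<bar> * K t \<le> \<epsilon> * K t + 2 * B * q" if t: "t \<in> {0..pi}" for t
      unfolding K_def q_def using r \<eta> \<epsilon> B[OF t] B[OF \<theta>] near[OF t]
      by (intro mult_cos_poisson_kernel_le) auto
    then have "norm (integral {0..pi} (\<lambda>t. (\<phi> t - \<phi> \<theta>) * K t)) \<le> integral {0..pi} (\<lambda>t. \<epsilon> * K t + 2 * B * q)"
      using r contK cont K_def cos_poisson_kernel_nonneg
      by (intro integral_norm_bound_integral integrable_continuous_interval continuous_intros)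
         (auto simp: abs_mult)
    then show ?thesis by simp
  qed
  moreover have "integral {0..pi} (\<lambda>t. \<epsilon> * K t + 2 * B * q) = (\<epsilon> + 2 * B * q) * pi"
  proof -
    have "(\<lambda>t. \<epsilon> * K t) integrable_on {0..pi}"
      using contK by (intro integrable_continuous_interval continuous_intros)
    then have "integral {0..pi} (\<lambda>t. \<epsilon> * K t + 2 * B * q) = \<epsilon> * integral {0..pi} K + 2 * B * q * pi"
      by (subst integral_add) auto
    then show ?thesis
      using intK by (simp add: algebra_simps)
  qed
  ultimately have "\<bar>integral {0..pi} (\<lambda>t. \<phi> t * K t) - \<phi> \<theta> * pi\<bar> \<le> (\<epsilon> + 2 * B * q) * pi"
    by simp
  then show ?thesis
    unfolding K_def q_def by (simp add: field_simps)
qed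

lemma uniformly_continuous_on_cos:
  fixes \<phi> :: "real \<Rightarrow> real"
  assumes "continuous_on {0..pi} \<phi>" "0 < \<epsilon>"
  obtains \<eta> where "0 < \<eta>"
    "\<And>t u. t \<in> {0..pi} \<Longrightarrow> u \<in> {0..pi} \<Longrightarrow> \<bar>cos t - cos u\<bar> < \<eta> \<Longrightarrow> \<bar>\<phi> t - \<phi> u\<bar> < \<epsilon>"
proof -
  have "continuous_on {-1..1} (\<phi> \<circ> arccos)"
    using assms(1) arccos_lbound arccos_ubound
    by (intro continuous_on_compose continuous_on_arccos') (auto elim!: continuous_on_subset)
  then have "uniformly_continuous_on {-1..1} (\<phi> \<circ> arccos)"
    by (rule compact_uniformly_continuous) simp
  then obtain \<eta> where \<eta>: "0 < \<eta>"
    "\<And>x y. x \<in> {-1..1} \<Longrightarrow> y \<in> {-1..1} \<Longrightarrow> dist y x < \<eta> \<Longrightarrow> dist (\<phi> (arccos y)) (\<phi> (arccos x)) < \<epsilon>"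
    unfolding uniformly_continuous_on_def comp_def using assms(2) by metis
  show ?thesis
  proof
    fix t u assume "t \<in> {0..pi}" "u \<in> {0..pi}" "\<bar>cos t - cos u\<bar> < \<eta>"
    then show "\<bar>\<phi> t - \<phi> u\<bar> < \<epsilon>"
      using \<eta>(2)[of "cos u" "cos t"] by (simp add: dist_real_def arccos_cos)
  qed (fact \<eta>)
qed

lemma abel_mean_tendsto:
  fixes \<phi> :: "real \<Rightarrow> real"
  assumes cont: "continuous_on {0..pi} \<phi>" and \<theta>: "\<theta> \<in> {0..pi}"
  shows "((\<lambda>r. (1 / pi) * integral {0..pi} (\<lambda>t. \<phi> t * cos_poisson_kernel r \<theta> t)) \<longlongrightarrow> \<phi> \<theta>) (at_left 1)"
proof (rule tendstoI)
  fix \<epsilon> :: real assume \<epsilon>: "0 < \<epsilon>"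
  obtain B where B: "\<And>t. t \<in> {0..pi} \<Longrightarrow> \<bar>\<phi> t\<bar> \<le> B"
    using continuous_on_compact_bound[OF compact_Icc cont] unfolding real_norm_def by blast
  obtain \<eta> where \<eta>: "0 < \<eta>"
    and near: "\<And>t u. t \<in> {0..pi} \<Longrightarrow> u \<in> {0..pi} \<Longrightarrow> \<bar>cos t - cos u\<bar> < \<eta> \<Longrightarrow> \<bar>\<phi> t - \<phi> u\<bar> < \<epsilon> / 2"
    using uniformly_continuous_on_cos[OF cont, of "\<epsilon> / 2"] \<epsilon> by auto
  have "((\<lambda>r. 2 * B * ((1 - r\<^sup>2) / (r * \<eta>\<^sup>2))) \<longlongrightarrow> 2 * B * ((1 - 1\<^sup>2) / (1 * \<eta>\<^sup>2))) (at_left 1)"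
    using \<eta> by (intro tendsto_intros) auto
  then have "\<forall>\<^sub>F r in at_left 1. 2 * B * ((1 - r\<^sup>2) / (r * \<eta>\<^sup>2)) < \<epsilon> / 2"
    using \<epsilon> by (intro order_tendstoD(2)) auto
  moreover have "\<forall>\<^sub>F r in at_left 1. r \<in> {0<..<1::real}"
    by (intro eventually_at_left_real) simp
  ultimately show "\<forall>\<^sub>F r in at_left 1.
      dist ((1 / pi) * integral {0..pi} (\<lambda>t. \<phi> t * cos_poisson_kernel r \<theta> t)) (\<phi> \<theta>) < \<epsilon>"
  proof eventually_elim
    case (elim r)
    then show ?case
      using abel_mean_error_le[OF cont B \<theta> _ _ \<eta> _ near[OF _ \<theta>], of r] \<epsilon> by (simp add: dist_real_def)
  qed
qed

lemma continuous_on_abel_sum: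
  fixes b :: "int \<Rightarrow> real"
  assumes "(\<lambda>n. norm (b n)) summable_on UNIV"
  shows "continuous_on {0..1} (\<lambda>y. \<Sum>\<^sub>\<infinity>n. y ^ nat \<bar>n\<bar> * b n)"
proof -
  have "\<forall>\<^sub>F X in finite_subsets_at_top UNIV. continuous_on {0..1} (\<lambda>y. \<Sum>n\<in>X. y ^ nat \<bar>n\<bar> * b n)"
    by (intro always_eventually allI continuous_intros)
  moreover have "uniform_limit {0..1} (\<lambda>X y. \<Sum>n\<in>X. y ^ nat \<bar>n\<bar> * b n) (\<lambda>y. \<Sum>\<^sub>\<infinity>n. y ^ nat \<bar>n\<bar> * b n)
          (finite_subsets_at_top UNIV)"
  proof (rule Weierstrass_m_test_general[OF _ assms])
    fix n :: int and y :: real assume "y \<in> {0..1}"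
    then show "norm (y ^ nat \<bar>n\<bar> * b n) \<le> norm (b n)"
      by (auto simp: abs_mult power_le_one intro!: mult_left_le_one_le)
  qed
  ultimately show ?thesis
    by (rule uniform_limit_theorem) simp
qed

text \<open>By Abel's theorem the series is the limit of its Abel means as \<open>r \<rightarrow> 1\<close>.\<close>

theorem cos_coeff_series_has_sum:
  fixes \<phi> :: "real \<Rightarrow> real"
  assumes cont: "continuous_on {0..pi} \<phi>"
    and summable: "(\<lambda>n. norm (cos_coeff \<phi> n)) summable_on UNIV" and \<theta>: "\<theta> \<in> {0..pi}"
  shows "((\<lambda>n. cos_coeff \<phi> n * cos (of_int n * \<theta>)) has_sum \<phi> \<theta>) UNIV"
proof -
  define b where "b = (\<lambda>n. cos_coeff \<phi> n * cos (of_int n * \<theta>))"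
  define G where "G = (\<lambda>y::real. \<Sum>\<^sub>\<infinity>n. y ^ nat \<bar>n\<bar> * b n)"
  have b: "(\<lambda>n. norm (b n)) summable_on UNIV"
    using summable by (rule Infinite_Sum.abs_summable_on_comparison_test') (simp add: b_def abs_mult mult_left_le)
  have "continuous_on {0..1} G"
    unfolding G_def using b by (rule continuous_on_abel_sum)
  then have "(G \<longlongrightarrow> G 1) (at 1 within {0..1})"
    unfolding continuous_on_def by (rule bspec) simp
  then have "(G \<longlongrightarrow> G 1) (at_left 1)"
    using at_within_Icc_at_left[of 0 "1::real"] by simp
  moreover have "(G \<longlongrightarrow> \<phi> \<theta>) (at_left 1)"
  proof (rule Lim_transform_eventually[OF abel_mean_tendsto[OF cont \<theta>]])
    have "\<forall>\<^sub>F r in at_left 1. r \<in> {0<..<1::real}"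
      by (intro eventually_at_left_real) simp
    then show "\<forall>\<^sub>F r in at_left 1. (1 / pi) * integral {0..pi} (\<lambda>t. \<phi> t * cos_poisson_kernel r \<theta> t) = G r"
      by eventually_elim (use has_sum_abel_mean[OF cont] in \<open>auto simp: G_def b_def intro!: infsumI[symmetric]\<close>)
  qed
  ultimately have "G 1 = \<phi> \<theta>"
    using tendsto_unique trivial_limit_at_left_real by blast
  moreover have "b summable_on UNIV"
    using b by (rule abs_summable_summable)
  ultimately show ?thesis
    by (simp add: G_def b_def has_sum_iff)
qed

section \<open>Aliasing under the discrete Fourier transform\<close>

definition root_pow :: "nat \<Rightarrow> int \<Rightarrow> complex" where
  "root_pow N x = exp (2 * pi * \<i> * of_int x / of_nat N)"

lemma root_pow_add: "root_pow N (x + y) = root_pow N x * root_pow N y"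
  by (simp add: root_pow_def distrib_left add_divide_distrib exp_add)

lemma root_pow_mult_of_nat: "root_pow N (x * int k) = root_pow N x ^ k"
  by (simp add: root_pow_def flip: exp_of_nat_mult) (simp add: field_simps)

lemma root_pow_eq_1_iff:
  assumes "0 < N"
  shows "root_pow N x = 1 \<longleftrightarrow> int N dvd x"
proof
  assume "root_pow N x = 1"
  then obtain n :: int where "Im (2 * pi * \<i> * of_int x / of_nat N) = of_int (2 * n) * pi"
    unfolding root_pow_def exp_eq_1 by blast
  then have "real_of_int x = real N * of_int n"
    using assms by (simp add: field_simps)
  then show "int N dvd x"
    by (metis dvdI of_int_eq_iff of_int_mult of_int_of_nat_eq)
next
  assume "int N dvd x"
  then obtain q where "x = int N * q" ..
  then have "root_pow N x = exp ((2 * of_int q * pi) * \<i>)"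
    using assms by (simp add: root_pow_def field_simps)
  also have "\<dots> = 1"
    by (rule exp_integer_2pi) simp
  finally show "root_pow N x = 1" .
qed

lemma sum_root_pow:
  assumes "0 < N"
  shows "(\<Sum>k<N. root_pow N (x * int k)) = (if int N dvd x then of_nat N else 0)"
proof (cases "int N dvd x")
  case False
  have "root_pow N x ^ N = 1"
    using root_pow_eq_1_iff[OF assms, of "x * int N"] by (simp add: root_pow_mult_of_nat)
  moreover have "root_pow N x \<noteq> 1"
    using False root_pow_eq_1_iff[OF assms] by simp
  ultimately show ?thesis
    using False by (simp add: root_pow_mult_of_nat sum_gp_strict)
next
  case True
  then have "root_pow N x = 1"
    using root_pow_eq_1_iff[OF assms] by simp
  then show ?thesis
    using True by (simp add: root_pow_mult_of_nat)
qed

lemma of_real_cos_eq_root_pow: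
  "complex_of_real (cos (2 * pi * of_int x / of_nat N)) = (root_pow N x + root_pow N (- x)) / 2"
  by (simp add: cos_of_real[symmetric] cos_exp_eq root_pow_def field_simps)

lemma sum_cos_mult_root_pow:
  assumes "0 < N"
  shows "(\<Sum>k<N. complex_of_real (cos (2 * pi * of_int (n * int k) / of_nat N)) * root_pow N (- m * int k))
           = of_nat N / 2 * (of_bool (int N dvd (n - m)) + of_bool (int N dvd (n + m)))"
proof -
  have "complex_of_real (cos (2 * pi * of_int (n * int k) / of_nat N)) * root_pow N (- m * int k)
      = (root_pow N (n * int k + - m * int k) + root_pow N (- (n * int k) + - m * int k)) / 2" for k
    unfolding of_real_cos_eq_root_pow root_pow_add by (simp add: field_simps)
  also have "(root_pow N (n * int k + - m * int k) + root_pow N (- (n * int k) + - m * int k)) / 2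
      = (root_pow N ((n - m) * int k) + root_pow N (- (n + m) * int k)) / 2" for k
    by (simp add: algebra_simps)
  finally have "complex_of_real (cos (2 * pi * of_int (n * int k) / of_nat N)) * root_pow N (- m * int k)
      = (root_pow N ((n - m) * int k) + root_pow N (- (n + m) * int k)) / 2" for k .
  then have "(\<Sum>k<N. complex_of_real (cos (2 * pi * of_int (n * int k) / of_nat N)) * root_pow N (- m * int k))
      = ((\<Sum>k<N. root_pow N ((n - m) * int k)) + (\<Sum>k<N. root_pow N (- (n + m) * int k))) / 2"
    by (simp only: sum.distrib[symmetric] sum_divide_distrib[symmetric])
  then show ?thesis
    using assms dvd_minus_iff[of "int N" "n + m"] by (simp add: sum_root_pow)
qed

lemma has_sum_sum:
  fixes f :: "'k \<Rightarrow> 'a \<Rightarrow> 'b::topological_comm_monoid_add"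
  assumes "\<And>k. k \<in> K \<Longrightarrow> (f k has_sum s k) A"
  shows "((\<lambda>x. \<Sum>k\<in>K. f k x) has_sum (\<Sum>k\<in>K. s k)) A"
proof (cases "finite K")
  case True
  then show ?thesis
    using assms by (induction K rule: finite_induct) (auto intro: has_sum_add)
qed simp

lemma has_sum_residue_class_iff:
  fixes a :: "int \<Rightarrow> real"
  assumes "0 < N"
  shows "((\<lambda>n. of_bool (int N dvd (n - m)) * a n) has_sum S) UNIV
           \<longleftrightarrow> ((\<lambda>l. a (m + l * int N)) has_sum S) UNIV"
proof -
  have "inj (\<lambda>l. m + l * int N)"
    using assms by (auto simp: inj_on_def)
  moreover have "range (\<lambda>l. m + l * int N) = {n. int N dvd (n - m)}"
    by (auto simp: dvd_def image_iff algebra_simps)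
  ultimately have "((\<lambda>l. a (m + l * int N)) has_sum S) UNIV \<longleftrightarrow> (a has_sum S) {n. int N dvd (n - m)}"
    using has_sum_reindex[of "\<lambda>l. m + l * int N" UNIV a S] by (simp add: comp_def)
  also have "\<dots> \<longleftrightarrow> ((\<lambda>n. of_bool (int N dvd (n - m)) * a n) has_sum S) UNIV"
    by (rule has_sum_cong_neutral) auto
  finally show ?thesis ..
qed

lemma has_sum_residue_classes:
  fixes a :: "int \<Rightarrow> real" and m :: int
  assumes summable: "a summable_on UNIV" and even: "\<And>n. a (- n) = a n" and N: "0 < N"
  defines "R \<equiv> \<Sum>\<^sub>\<infinity>l. a (m + l * int N)"
  shows "((\<lambda>l. a (m + l * int N)) has_sum R) UNIV"
    and "((\<lambda>n. of_bool (int N dvd (n - m)) * a n) has_sum R) UNIV"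
    and "((\<lambda>n. of_bool (int N dvd (n + m)) * a n) has_sum R) UNIV"
proof -
  have "a summable_on range (\<lambda>l. m + l * int N)"
    using summable by (rule summable_on_subset_banach) simp
  then have "(\<lambda>l. a (m + l * int N)) summable_on UNIV"
    using N by (subst (asm) summable_on_reindex) (auto simp: inj_on_def comp_def)
  then show R: "((\<lambda>l. a (m + l * int N)) has_sum R) UNIV"
    unfolding R_def by simp
  then show "((\<lambda>n. of_bool (int N dvd (n - m)) * a n) has_sum R) UNIV"
    using has_sum_residue_class_iff[OF N] by blast
  have "((\<lambda>l. a (- m + l * int N)) \<circ> uminus) = (\<lambda>l. a (m + l * int N))"
  proof
    fix l
    have "- m + - l * int N = - (m + l * int N)"
      by simp
    then show "((\<lambda>l. a (- m + l * int N)) \<circ> uminus) l = a (m + l * int N)"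
      by (simp only: comp_apply even)
  qed
  then have "((\<lambda>l. a (- m + l * int N)) has_sum R) UNIV"
    using R has_sum_reindex[of uminus UNIV "\<lambda>l. a (- m + l * int N)" R] by simp
  then show "((\<lambda>n. of_bool (int N dvd (n + m)) * a n) has_sum R) UNIV"
    using has_sum_residue_class_iff[OF N, of "- m"] by simp
qed

lemma has_sum_aliased_dft:
  fixes a :: "int \<Rightarrow> real" and v :: "nat \<Rightarrow> real"
  assumes summable: "a summable_on UNIV" and even: "\<And>n. a (- n) = a n" and N: "0 < N"
    and v: "\<And>k. k < N \<Longrightarrow> ((\<lambda>n. a n * cos (2 * pi * of_int (n * int k) / of_nat N)) has_sum v k) UNIV"
  shows "((\<lambda>l. complex_of_real (a (m + l * int N))) has_sum
           (\<Sum>k<N. complex_of_real (v k) * root_pow N (- m * int k)) / of_nat N) UNIV"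
proof -
  define R where "R = (\<Sum>\<^sub>\<infinity>l. a (m + l * int N))"
  note R = has_sum_residue_classes[where a = a and m = m and N = N, OF summable even N, folded R_def]
  define w where "w k = root_pow N (- m * int k)" for k
  have sampled: "((\<lambda>n. \<Sum>k<N. complex_of_real (a n * cos (2 * pi * of_int (n * int k) / of_nat N)) * w k)
      has_sum (\<Sum>k<N. complex_of_real (v k) * w k)) UNIV"
    by (intro has_sum_sum has_sum_cmult_left has_sum_of_real v) simp
  have sum_eq: "(\<Sum>k<N. complex_of_real (a n * cos (2 * pi * of_int (n * int k) / of_nat N)) * w k)
      = of_nat N / 2 * complex_of_real (of_bool (int N dvd (n - m)) * a n + of_bool (int N dvd (n + m)) * a n)" for n
  proof -
    have "(\<Sum>k<N. complex_of_real (a n * cos (2 * pi * of_int (n * int k) / of_nat N)) * w k)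
        = complex_of_real (a n) * (\<Sum>k<N. complex_of_real (cos (2 * pi * of_int (n * int k) / of_nat N)) * w k)"
      by (simp add: sum_distrib_left mult.assoc)
    also have "\<dots> = complex_of_real (a n) * (of_nat N / 2 * (of_bool (int N dvd (n - m)) + of_bool (int N dvd (n + m))))"
      unfolding w_def by (simp only: sum_cos_mult_root_pow[OF N])
    finally show ?thesis
      by (simp add: algebra_simps)
  qed
  have "((\<lambda>n. of_nat N / 2 * complex_of_real (of_bool (int N dvd (n - m)) * a n + of_bool (int N dvd (n + m)) * a n))
      has_sum of_nat N / 2 * complex_of_real (R + R)) UNIV"
    by (intro has_sum_cmult_right has_sum_of_real has_sum_add R(2,3))
  then have "((\<lambda>n. \<Sum>k<N. complex_of_real (a n * cos (2 * pi * of_int (n * int k) / of_nat N)) * w k)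
      has_sum of_nat N / 2 * complex_of_real (R + R)) UNIV"
    by (simp only: sum_eq)
  with sampled have "(\<Sum>k<N. complex_of_real (v k) * w k) = of_nat N / 2 * complex_of_real (R + R)"
    by (rule has_sum_unique)
  then have "(\<Sum>k<N. complex_of_real (v k) * w k) / of_nat N = complex_of_real R"
    using N by simp
  then show ?thesis
    using has_sum_of_real[OF R(1)] by (simp add: w_def)
qed

section \<open>The kernel and the symbol\<close>

lemma kernel_c_minus: "kernel_c h \<alpha> (- m) = kernel_c h \<alpha> m"
  by (simp add: kernel_c_def)

lemma kernel_c_eq_cos_coeff:
  assumes h: "0 < h" and \<alpha>: "0 < \<alpha>"
  shows "kernel_c h \<alpha> m = h powr (- \<alpha>) * cos_coeff (\<lambda>t. t powr \<alpha>) m"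
proof -
  define f where "f = (\<lambda>t::real. t powr \<alpha> * cos (of_int m * t))"
  define g where "g = (\<lambda>\<xi>::real. \<xi> powr \<alpha> * cos (of_int m * h * \<xi>))"
  have "(f has_integral integral {0..pi} f) {0..pi}"
    unfolding f_def using \<alpha>
    by (intro integrable_integral integrable_continuous_interval continuous_intros continuous_on_powr_const) auto
  from has_integral_stretch_real[OF this, of h]
  have "((\<lambda>x. f (h * x)) has_integral integral {0..pi} f / h) {0..pi / h}"
    using h by simp
  moreover have "f (h * x) = h powr \<alpha> * g x" if "x \<in> {0..pi / h}" for x
    using that h by (simp add: f_def g_def powr_mult mult_ac)
  ultimately have "((\<lambda>x. h powr \<alpha> * g x) has_integral integral {0..pi} f / h) {0..pi / h}"
    using has_integral_cong[of "{0..pi / h}" "\<lambda>x. f (h * x)" "\<lambda>x. h powr \<alpha> * g x"] by simp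
  then have "((\<lambda>x. h powr (- \<alpha>) * (h powr \<alpha> * g x)) has_integral h powr (- \<alpha>) * (integral {0..pi} f / h)) {0..pi / h}"
    by (rule has_integral_mult_right)
  moreover have "(\<lambda>x. h powr (- \<alpha>) * (h powr \<alpha> * g x)) = g"
    using h by (simp add: fun_eq_iff mult.assoc[symmetric] flip: powr_add)
  ultimately have "(g has_integral h powr (- \<alpha>) * (integral {0..pi} f / h)) {0..pi / h}"
    by (simp only:)
  then have "integral {0..pi / h} g = h powr (- \<alpha>) * (integral {0..pi} f / h)"
    by (rule integral_unique)
  then show ?thesis
    using h by (simp add: kernel_c_def cos_coeff_def f_def g_def field_simps)
qed

lemma abs_xi_bar_le:
  assumes "0 < h" "k < N"
  shows "h * \<bar>xi_bar h N k\<bar> \<le> pi"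
proof (cases "real k < real N / 2")
  case True
  then show ?thesis
    using assms by (simp add: xi_bar_def abs_mult field_simps)
next
  case False
  have N: "0 < real N"
    using assms by simp
  have eq: "h * xi_bar h N k = 2 * pi * real k / real N - 2 * pi"
    using False assms by (simp add: xi_bar_def field_simps)
  moreover have "2 * pi * real k / real N < 2 * pi"
    using assms N by (simp add: field_simps)
  ultimately have "h * xi_bar h N k < 0"
    by simp
  then have "xi_bar h N k < 0"
    using assms by (simp add: mult_less_0_iff)
  then have "h * \<bar>xi_bar h N k\<bar> = 2 * pi - 2 * pi * real k / real N"
    using eq by simp
  also have "\<dots> \<le> pi"
    using False N by (simp add: field_simps)
  finally show ?thesis .
qed

lemma cos_mult_abs_xi_bar:
  assumes "0 < h" "k < N"
  shows "cos (of_int n * (h * \<bar>xi_bar h N k\<bar>)) = cos (2 * pi * of_int (n * int k) / of_nat N)"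
proof -
  have "cos (of_int n * (h * \<bar>xi_bar h N k\<bar>)) = cos (of_int n * (h * xi_bar h N k))"
    by (cases "0 \<le> xi_bar h N k") simp_all
  also have "\<dots> = cos (2 * pi * of_int (n * int k) / of_nat N)"
  proof (cases "real k < real N / 2")
    case True
    then show ?thesis
      using assms by (simp add: xi_bar_def field_simps)
  next
    case False
    then have "of_int n * (h * xi_bar h N k) = 2 * pi * of_int (n * int k) / of_nat N - of_int n * (2 * pi)"
      using assms by (simp add: xi_bar_def field_simps)
    moreover have "cos (of_int n * (2 * pi)) = 1" "sin (of_int n * (2 * pi)) = 0"
      using cos_int_2pin[of n] sin_int_2pin[of n] by (simp_all add: mult.commute)
    ultimately show ?thesis
      by (simp add: cos_diff)
  qed
  finally show ?thesis .
qed

lemma has_sum_kernel_c_aliased: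
  assumes h: "0 < h" and \<alpha>: "0 < \<alpha>" and N: "0 < N"
  shows "((\<lambda>l. complex_of_real (kernel_c h \<alpha> (m + l * int N))) has_sum
           (\<Sum>k<N. complex_of_real (\<bar>xi_bar h N k\<bar> powr \<alpha>) * root_pow N (- m * int k)) / of_nat N) UNIV"
proof (rule has_sum_aliased_dft)
  show "kernel_c h \<alpha> (- n) = kernel_c h \<alpha> n" for n
    by (rule kernel_c_minus)
  show "0 < N" by fact
  have "cos_coeff (\<lambda>t. t powr \<alpha>) summable_on UNIV"
    using cos_coeff_powr_abs_summable[OF \<alpha>] by (rule abs_summable_summable)
  then show "kernel_c h \<alpha> summable_on UNIV"
    using summable_on_cmult_right by (simp add: kernel_c_eq_cos_coeff[OF h \<alpha>, abs_def])
  fix k assume k: "k < N"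
  define \<theta> where "\<theta> = h * \<bar>xi_bar h N k\<bar>"
  have "((\<lambda>n. cos_coeff (\<lambda>t. t powr \<alpha>) n * cos (of_int n * \<theta>)) has_sum \<theta> powr \<alpha>) UNIV"
    using \<alpha> abs_xi_bar_le[OF h k] h unfolding \<theta>_def
    by (intro cos_coeff_series_has_sum continuous_on_powr_const cos_coeff_powr_abs_summable) auto
  then have "((\<lambda>n. h powr (- \<alpha>) * (cos_coeff (\<lambda>t. t powr \<alpha>) n * cos (of_int n * \<theta>)))
      has_sum h powr (- \<alpha>) * \<theta> powr \<alpha>) UNIV"
    by (rule has_sum_cmult_right)
  moreover have "h powr (- \<alpha>) * \<theta> powr \<alpha> = \<bar>xi_bar h N k\<bar> powr \<alpha>"
    using h by (simp add: \<theta>_def powr_mult powr_minus field_simps)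
  ultimately show "((\<lambda>n. kernel_c h \<alpha> n * cos (2 * pi * of_int (n * int k) / of_nat N)) has_sum
      \<bar>xi_bar h N k\<bar> powr \<alpha>) UNIV"
    by (simp add: kernel_c_eq_cos_coeff[OF h \<alpha>] \<theta>_def cos_mult_abs_xi_bar[OF h k] mult.assoc)
qed

section \<open>The inverse of the quantum Fourier transform\<close>

definition iQFT :: "nat \<Rightarrow> complex mat" where
  "iQFT N = mat N N (\<lambda>(i, j). root_pow N (- int (i * j)) / of_real (sqrt (real N)))"

lemma dim_QFT [simp]: "dim_row (QFT N) = N" "dim_col (QFT N) = N"
  by (simp_all add: QFT_def)

lemma dim_iQFT [simp]: "dim_row (iQFT N) = N" "dim_col (iQFT N) = N"
  by (simp_all add: iQFT_def)

lemma QFT_index: "i < N \<Longrightarrow> j < N \<Longrightarrow> QFT N $$ (i, j) = root_pow N (int i * int j) / of_real (sqrt (real N))"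
  by (simp add: QFT_def root_pow_def mult.commute)

lemma iQFT_index: "i < N \<Longrightarrow> j < N \<Longrightarrow> iQFT N $$ (i, j) = root_pow N (- (int i * int j)) / of_real (sqrt (real N))"
  by (simp add: iQFT_def)

lemma of_real_sqrt_mult_self: "complex_of_real (sqrt (real N)) * complex_of_real (sqrt (real N)) = of_nat N"
  by (simp flip: of_real_mult)

lemma QFT_index_mult_iQFT_index:
  "i < N \<Longrightarrow> k < N \<Longrightarrow> j < N \<Longrightarrow> QFT N $$ (i, k) * iQFT N $$ (k, j) = root_pow N ((int i - int j) * int k) / of_nat N"
  by (simp add: QFT_index iQFT_index of_real_sqrt_mult_self algebra_simps flip: root_pow_add)

lemma iQFT_index_mult_QFT_index:
  "i < N \<Longrightarrow> k < N \<Longrightarrow> j < N \<Longrightarrow> iQFT N $$ (i, k) * QFT N $$ (k, j) = root_pow N (- (int i - int j) * int k) / of_nat N"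
  by (simp add: QFT_index iQFT_index of_real_sqrt_mult_self algebra_simps flip: root_pow_add)

lemma sum_root_pow_diff:
  assumes "a < N" "b < N"
  shows "(\<Sum>k<N. root_pow N ((int a - int b) * int k)) / of_nat N = (if a = b then 1 else 0)"
proof -
  have "int N dvd (int a - int b) \<longleftrightarrow> a = b"
    using assms by (simp flip: mod_eq_dvd_iff)
  then show ?thesis
    using assms by (simp add: sum_root_pow)
qed

lemma QFT_mult_iQFT: "QFT N * iQFT N = 1\<^sub>m N"
proof (rule eq_matI)
  fix a b assume "a < dim_row (1\<^sub>m N)" "b < dim_col (1\<^sub>m N)"
  then have a: "a < N" and b: "b < N" by auto
  have "(QFT N * iQFT N) $$ (a, b) = (\<Sum>k<N. QFT N $$ (a, k) * iQFT N $$ (k, b))"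
    using a b by (simp add: scalar_prod_def atLeast0LessThan)
  also have "\<dots> = (\<Sum>k<N. root_pow N ((int a - int b) * int k)) / of_nat N"
    using a b by (simp add: QFT_index_mult_iQFT_index sum_divide_distrib)
  also have "\<dots> = 1\<^sub>m N $$ (a, b)"
    using a b by (simp add: sum_root_pow_diff)
  finally show "(QFT N * iQFT N) $$ (a, b) = 1\<^sub>m N $$ (a, b)" .
qed simp_all

lemma iQFT_mult_QFT: "iQFT N * QFT N = 1\<^sub>m N"
proof (rule eq_matI)
  fix a b assume "a < dim_row (1\<^sub>m N)" "b < dim_col (1\<^sub>m N)"
  then have a: "a < N" and b: "b < N" by auto
  have "(iQFT N * QFT N) $$ (a, b) = (\<Sum>k<N. iQFT N $$ (a, k) * QFT N $$ (k, b))"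
    using a b by (simp add: scalar_prod_def atLeast0LessThan)
  also have "\<dots> = (\<Sum>k<N. root_pow N ((int b - int a) * int k)) / of_nat N"
    using a b by (simp add: iQFT_index_mult_QFT_index sum_divide_distrib)
  also have "\<dots> = 1\<^sub>m N $$ (a, b)"
    using a b by (auto simp: sum_root_pow_diff)
  finally show "(iQFT N * QFT N) $$ (a, b) = 1\<^sub>m N $$ (a, b)" .
qed simp_all

lemma mat_inv_QFT: "mat_inv N (QFT N) = iQFT N"
  unfolding mat_inv_def
proof (rule the_equality)
  have carrier: "QFT N \<in> carrier_mat N N" "iQFT N \<in> carrier_mat N N"
    by (simp_all add: QFT_def iQFT_def)
  then show "iQFT N \<in> carrier_mat N N \<and> QFT N * iQFT N = 1\<^sub>m N \<and> iQFT N * QFT N = 1\<^sub>m N"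
    by (intro conjI QFT_mult_iQFT iQFT_mult_QFT)
  fix B assume "B \<in> carrier_mat N N \<and> QFT N * B = 1\<^sub>m N \<and> B * QFT N = 1\<^sub>m N"
  then have B: "B \<in> carrier_mat N N" and right_inverse: "QFT N * B = 1\<^sub>m N"
    by simp_all
  have "B = (iQFT N * QFT N) * B"
    by (simp only: iQFT_mult_QFT left_mult_one_mat[OF B])
  also have "\<dots> = iQFT N * (QFT N * B)"
    by (rule assoc_mult_mat[OF carrier(2,1) B])
  also have "\<dots> = iQFT N"
    by (simp only: right_inverse right_mult_one_mat[OF carrier(2)])
  finally show "B = iQFT N" .
qed

lemma A_tilde_index:
  assumes "i < N" "j < N"
  shows "A_tilde \<alpha> h N $$ (i, j)
           = (\<Sum>k<N. complex_of_real (\<bar>xi_bar h N k\<bar> powr \<alpha>) * root_pow N (- (int i - int j) * int k)) / of_nat N"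
proof -
  define d where "d k = complex_of_real (\<bar>xi_bar h N k\<bar> powr \<alpha>)" for k
  have "A_tilde \<alpha> h N = mat N N (\<lambda>(i, k). iQFT N $$ (i, k) * d k) * QFT N"
    unfolding A_tilde_def mat_inv_QFT d_def
    by (subst mat_diag_mult_right) (auto simp: iQFT_def)
  then have "A_tilde \<alpha> h N $$ (i, j) = (\<Sum>k<N. iQFT N $$ (i, k) * d k * QFT N $$ (k, j))"
    using assms by (simp add: scalar_prod_def atLeast0LessThan QFT_def)
  also have "\<dots> = (\<Sum>k<N. d k * root_pow N (- (int i - int j) * int k) / of_nat N)"
  proof (rule sum.cong)
    fix k assume "k \<in> {..<N}"
    then have "iQFT N $$ (i, k) * QFT N $$ (k, j) = root_pow N (- (int i - int j) * int k) / of_nat N"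
      using assms by (simp add: iQFT_index_mult_QFT_index)
    then show "iQFT N $$ (i, k) * d k * QFT N $$ (k, j) = d k * root_pow N (- (int i - int j) * int k) / of_nat N"
      by (simp add: ac_simps)
  qed simp
  finally show ?thesis
    by (simp add: d_def sum_divide_distrib)
qed

theorem proposition1:
  fixes h \<alpha> :: real and n N i j :: nat
  assumes "h > 0" and "0 < \<alpha>" and "\<alpha> \<le> 2" and "n > 0" and "N = 2 ^ n"
    and "i < N" and "j < N"
  shows "((\<lambda>l::int. of_real (kernel_c h \<alpha> (int i - int j + l * int N))) has_sum (A_tilde \<alpha> h N $$ (i, j))) UNIV
       \<and> ((\<lambda>l::int. of_real (kernel_c h \<alpha> (int i - int j + l * int N))) has_sum ((A_tilde \<alpha> h N - A_toep \<alpha> h N) $$ (i, j))) (UNIV - {0})"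
proof
  have N: "0 < N"
    using assms(5) by simp
  show aliased: "((\<lambda>l::int. of_real (kernel_c h \<alpha> (int i - int j + l * int N))) has_sum (A_tilde \<alpha> h N $$ (i, j))) UNIV"
    unfolding A_tilde_index[OF assms(6,7)] by (rule has_sum_kernel_c_aliased[OF assms(1,2) N])
  have "(A_tilde \<alpha> h N - A_toep \<alpha> h N) $$ (i, j) = A_tilde \<alpha> h N $$ (i, j) - of_real (kernel_c h \<alpha> (int i - int j))"
    using assms(6,7) by (simp add: A_toep_def)
  then show "((\<lambda>l::int. of_real (kernel_c h \<alpha> (int i - int j + l * int N))) has_sum ((A_tilde \<alpha> h N - A_toep \<alpha> h N) $$ (i, j))) (UNIV - {0})"
    using has_sum_Diff[OF aliased has_sum_finite[of "{0}"]] by simp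
qed

end
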